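(* For $n\in\mathbb{N}$, let $X_1,\dots,X_n$ be i.i.d. random lifetimes distributed as $X$, having finite cumulative information generating measure $H_X$ and cumulative residual information generating measure $K_X$. Let $X_{(n:n)}=\max\{X_1,\dots,X_n\}$ and $X_{(1:n)}=\min\{X_1,\dots,X_n\}$. Then $$G_{X_{(n:n)}}(\alpha,\beta)=\sum_{i=0}^\infty(-1)^i\binom{\beta}{i}H_X(n(i+\alpha))\qquad\text{for all }(\alpha,\beta)\in D_{X_{(n:n)}},$$ $$G_{X_{(1:n)}}(\alpha,\beta)=\sum_{j=0}^\infty(-1)^j\binom{\alpha}{j}K_X(n(j+\beta))\qquad\text{for all }(\alpha,\beta)\in D_{X_{(1:n)}}.$$
   Context: Random lifetimes are nonnegative random variables. For a random variable $Z$ with CDF $F$ and survival function $\overline F=1-F$, with $l=\inf\{x:F(x)>0\}$, $r=\sup\{x:\overline F(x)>0\}$, the CIGF is $G_Z(\alpha,\beta)=\int_l^r [F(x)]^\alpha[\overline F(x)]^\beta\,dx$ on $D_Z=\{(\alpha,\beta)\in\mathbb{R}^2: G_Z(\alpha,\beta)<\infty\}$; $H_Z(\alpha)=\int_l^r[F(x)]^\alpha dx$ and $K_Z(\beta)=\int_l^r[\overline F(x)]^\beta dx$. The generalized binomial coefficient is $\binom{\alpha}{n}=\alpha(\alpha-1)\cdots(\alpha-n+1)/n!$. *)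

theory Defs
  imports "HOL-Probability.Probability"
begin

definition cdf_rv :: "'a measure \<Rightarrow> ('a \<Rightarrow> real) \<Rightarrow> real \<Rightarrow> real" where
  "cdf_rv M Z x = measure M {\<omega> \<in> space M. Z \<omega> \<le> x}"

definition lend :: "(real \<Rightarrow> real) \<Rightarrow> ereal" where
  "lend F = Inf {ereal x | x. F x > 0}"

definition rend :: "(real \<Rightarrow> real) \<Rightarrow> ereal" where
  "rend F = Sup {ereal x | x. 1 - F x > 0}"

definition supp_int :: "(real \<Rightarrow> real) \<Rightarrow> real set" where
  "supp_int F = {x. lend F < ereal x \<and> ereal x < rend F}"

definition CIGF :: "'a measure \<Rightarrow> ('a \<Rightarrow> real) \<Rightarrow> real \<Rightarrow> real \<Rightarrow> ennreal" where
  "CIGF M Z \<alpha> \<beta> = (let F = cdf_rv M Z in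
     \<integral>\<^sup>+ x \<in> supp_int F. ennreal (F x powr \<alpha> * (1 - F x) powr \<beta>) \<partial>lborel)"

definition CIGF_H :: "'a measure \<Rightarrow> ('a \<Rightarrow> real) \<Rightarrow> real \<Rightarrow> ennreal" where
  "CIGF_H M Z \<alpha> = (let F = cdf_rv M Z in
     \<integral>\<^sup>+ x \<in> supp_int F. ennreal (F x powr \<alpha>) \<partial>lborel)"

definition CIGF_K :: "'a measure \<Rightarrow> ('a \<Rightarrow> real) \<Rightarrow> real \<Rightarrow> ennreal" where
  "CIGF_K M Z \<beta> = (let F = cdf_rv M Z in
     \<integral>\<^sup>+ x \<in> supp_int F. ennreal ((1 - F x) powr \<beta>) \<partial>lborel)"

end

theory Submission
  imports Defs
begin

(* The distribution function of the maximum of n i.i.d. copies of X is F^n and that of the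
   minimum is 1 - (1 - F)^n; both are positive, resp. below 1, exactly where F is, so every
   integral lives on the support interval of F.  There g = F^n (resp. g = (1 - F)^n) takes values
   in (0,1), the CIGF integrand is (1 - g)^beta g^alpha (resp. (1 - g)^alpha g^beta), and the
   generalised binomial series (1 - g)^b g^a = sum_i (-1)^i (b choose i) g^(i + a) may be
   integrated termwise: its coefficients have constant sign from i >= b on, so the partial sums
   are dominated by finitely many of the integrable terms g^(i + a) plus the integrable limit. *)

lemma alternating_gbinomial_Suc:
  fixes b :: real
  shows "(-1)^Suc i * (b gchoose Suc i) = (-1)^i * (b gchoose i) * ((real i - b) / real (Suc i))"
  by (simp add: gbinomial_pochhammer pochhammer_rec' field_simps)

lemma alternating_gbinomial_eventually_sign:
  fixes b :: real
  obtains s where "\<bar>s\<bar> = 1" "\<And>i. nat \<lceil>b\<rceil> \<le> i \<Longrightarrow> 0 \<le> s * ((-1)^i * (b gchoose i))"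
proof -
  define c where "c i = (-1)^i * (b gchoose i)" for i
  define s :: real where "s = (if 0 \<le> c (nat \<lceil>b\<rceil>) then 1 else -1)"
  have sign: "0 \<le> s * c i" if "nat \<lceil>b\<rceil> \<le> i" for i
    using that
  proof (induction i rule: dec_induct)
    case base
    show ?case by (simp add: s_def)
  next
    case (step i)
    have "0 \<le> (real i - b) / real (Suc i)"
      using \<open>nat \<lceil>b\<rceil> \<le> i\<close> by simp
    moreover have "s * c (Suc i) = s * c i * ((real i - b) / real (Suc i))"
      unfolding c_def by (simp only: alternating_gbinomial_Suc mult.assoc)
    ultimately show ?case
      using step.IH by (metis mult_nonneg_nonneg)
  qed
  have "\<bar>s\<bar> = 1"
    by (simp add: s_def)
  from that[OF this sign[unfolded c_def]] show ?thesis .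
qed

lemma eventually_signed_series_abs_bound:
  fixes v :: "nat \<Rightarrow> real"
  assumes v: "v sums V" and s: "\<bar>s\<bar> = 1" and sign: "\<And>i. N \<le> i \<Longrightarrow> 0 \<le> s * v i"
  shows "summable (\<lambda>i. \<bar>v i\<bar>)" and "(\<Sum>i. \<bar>v i\<bar>) \<le> 2 * (\<Sum>i<N. \<bar>v i\<bar>) + \<bar>V\<bar>"
proof -
  have "\<bar>v i\<bar> = s * v i" if "N \<le> i" for i
    using sign[OF that] s by (metis abs_mult abs_of_nonneg mult_1)
  then have "(\<lambda>i. \<bar>v i\<bar> - s * v i) sums (\<Sum>i<N. \<bar>v i\<bar> - s * v i)"
    by (intro sums_finite) auto
  from sums_add[OF this sums_mult[OF v, of s]]
  have abs_sums: "(\<lambda>i. \<bar>v i\<bar>) sums ((\<Sum>i<N. \<bar>v i\<bar> - s * v i) + s * V)"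
    by simp
  then show "summable (\<lambda>i. \<bar>v i\<bar>)"
    by (rule sums_summable)
  have s_abs: "\<bar>s * x\<bar> = \<bar>x\<bar>" for x
    using s by (simp add: abs_mult)
  have "(\<Sum>i<N. \<bar>v i\<bar> - s * v i) \<le> (\<Sum>i<N. 2 * \<bar>v i\<bar>)"
    using abs_ge_minus_self[of "s * v _"] by (intro sum_mono) (simp add: s_abs)
  moreover have "s * V \<le> \<bar>V\<bar>"
    using abs_ge_self[of "s * V"] by (simp add: s_abs)
  ultimately show "(\<Sum>i. \<bar>v i\<bar>) \<le> 2 * (\<Sum>i<N. \<bar>v i\<bar>) + \<bar>V\<bar>"
    using sums_unique[OF abs_sums] unfolding sum_distrib_left by linarith
qed

lemma gen_binomial_powr_sums:
  fixes t a b :: real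
  assumes "0 < t" "t < 1"
  shows "(\<lambda>i. (-1)^i * (b gchoose i) * t powr (real i + a)) sums ((1 - t) powr b * t powr a)"
proof -
  have "(\<lambda>i. (b gchoose i) * (-t)^i) sums (1 + -t) powr b"
    using assms by (intro gen_binomial_real) simp
  from sums_mult2[OF this, of "t powr a"]
  have "(\<lambda>i. (b gchoose i) * (-t)^i * t powr a) sums ((1 - t) powr b * t powr a)"
    by simp
  moreover have "t powr (real i + a) = t ^ i * t powr a" for i
    using assms by (simp add: powr_add powr_realpow)
  then have "(b gchoose i) * (-t)^i * t powr a = (-1)^i * (b gchoose i) * t powr (real i + a)" for i
    unfolding power_minus[of t i] by (simp only: mult.assoc mult.left_commute)
  ultimately show ?thesis
    by (simp only:)
qed

lemma gen_binomial_powr_partial_abs_bound: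
  fixes t a b :: real
  assumes "0 < t" "t < 1"
  shows "(\<Sum>i<m. \<bar>(-1)^i * (b gchoose i) * t powr (real i + a)\<bar>)
           \<le> 2 * (\<Sum>i<nat \<lceil>b\<rceil>. \<bar>b gchoose i\<bar> * t powr (real i + a)) + (1 - t) powr b * t powr a"
proof -
  obtain s where s: "\<bar>s\<bar> = 1" and sign: "\<And>i. nat \<lceil>b\<rceil> \<le> i \<Longrightarrow> 0 \<le> s * ((-1)^i * (b gchoose i))"
    using alternating_gbinomial_eventually_sign by metis
  have term_sign: "0 \<le> s * ((-1)^i * (b gchoose i) * t powr (real i + a))" if "nat \<lceil>b\<rceil> \<le> i" for i
    using sign[OF that] by (simp add: mult.assoc[symmetric])
  note bound = eventually_signed_series_abs_bound[where N = "nat \<lceil>b\<rceil>",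
      OF gen_binomial_powr_sums[OF assms] s term_sign]
  have abs_term: "\<bar>(-1)^i * (b gchoose i) * t powr (real i + a)\<bar> = \<bar>b gchoose i\<bar> * t powr (real i + a)"
    for i
    by (simp add: abs_mult)
  have abs_limit: "\<bar>(1 - t) powr b * t powr a\<bar> = (1 - t) powr b * t powr a"
    by simp
  have "(\<Sum>i<m. \<bar>(-1)^i * (b gchoose i) * t powr (real i + a)\<bar>)
      \<le> (\<Sum>i. \<bar>(-1)^i * (b gchoose i) * t powr (real i + a)\<bar>)"
    by (rule sum_le_suminf[OF bound(1)]) auto
  also have "\<dots> \<le> 2 * (\<Sum>i<nat \<lceil>b\<rceil>. \<bar>b gchoose i\<bar> * t powr (real i + a)) + (1 - t) powr b * t powr a"
    using bound(2) unfolding abs_term abs_limit .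
  finally show ?thesis .
qed

lemma sums_integral_dominated:
  fixes f :: "nat \<Rightarrow> 'a \<Rightarrow> real"
  assumes f: "\<And>i. integrable M (f i)" and F: "F \<in> borel_measurable M" and B: "integrable M B"
    and sums: "AE x in M. (\<lambda>i. f i x) sums F x"
    and bound: "\<And>m. AE x in M. (\<Sum>i<m. \<bar>f i x\<bar>) \<le> B x"
  shows "(\<lambda>i. integral\<^sup>L M (f i)) sums integral\<^sup>L M F"
proof -
  have "(\<lambda>m. \<integral>x. (\<Sum>i<m. f i x) \<partial>M) \<longlonglongrightarrow> integral\<^sup>L M F"
  proof (rule integral_dominated_convergence[OF F _ B])
    show "(\<lambda>x. \<Sum>i<m. f i x) \<in> borel_measurable M" for m
      using f by simp
    show "AE x in M. (\<lambda>m. \<Sum>i<m. f i x) \<longlonglongrightarrow> F x"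
      using sums by (simp add: sums_def)
    show "AE x in M. norm (\<Sum>i<m. f i x) \<le> B x" for m
      using bound[of m] by eventually_elim (auto intro: order_trans[OF sum_abs])
  qed
  then show ?thesis
    unfolding sums_def using f by simp
qed

lemma integral_indicator_mult_eq_set_nn_integral:
  fixes h :: "'a \<Rightarrow> real"
  assumes "S \<in> sets M" "h \<in> borel_measurable M" "\<And>x. 0 \<le> h x"
  shows "(\<integral>x. indicator S x * h x \<partial>M) = enn2real (\<integral>\<^sup>+x\<in>S. ennreal (h x) \<partial>M)"
  using assms by (simp add: integral_eq_nn_integral nn_integral_set_ennreal mult.commute)

lemma integrable_indicator_mult_if_set_nn_integral_finite:
  fixes h :: "'a \<Rightarrow> real"
  assumes "S \<in> sets M" "h \<in> borel_measurable M" "\<And>x. 0 \<le> h x"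
    and "(\<integral>\<^sup>+x\<in>S. ennreal (h x) \<partial>M) < \<infinity>"
  shows "integrable M (\<lambda>x. indicator S x * h x)"
  using assms by (intro integrableI_nonneg) (simp_all add: nn_integral_set_ennreal mult.commute)

lemma gen_binomial_set_nn_integral_sums:
  fixes g :: "'a \<Rightarrow> real" and a b :: real
  assumes S: "S \<in> sets M" and g: "g \<in> borel_measurable M"
    and g01: "\<And>x. x \<in> S \<Longrightarrow> 0 < g x \<and> g x < 1"
    and fin: "(\<integral>\<^sup>+x\<in>S. ennreal ((1 - g x) powr b * g x powr a) \<partial>M) < \<infinity>"
    and fin_terms: "\<And>i. (\<integral>\<^sup>+x\<in>S. ennreal (g x powr (real i + a)) \<partial>M) < \<infinity>"
  shows "(\<lambda>i. (-1)^i * (b gchoose i) * enn2real (\<integral>\<^sup>+x\<in>S. ennreal (g x powr (real i + a)) \<partial>M))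
           sums enn2real (\<integral>\<^sup>+x\<in>S. ennreal ((1 - g x) powr b * g x powr a) \<partial>M)"
proof -
  define c where "c i = (-1)^i * (b gchoose i)" for i
  define u where "u i x = indicator S x * g x powr (real i + a)" for i x
  define w where "w x = indicator S x * ((1 - g x) powr b * g x powr a)" for x
  define B where "B x = 2 * (\<Sum>i<nat \<lceil>b\<rceil>. \<bar>b gchoose i\<bar> * u i x) + w x" for x
  have u: "integrable M (u i)" for i
    unfolding u_def using S g fin_terms by (intro integrable_indicator_mult_if_set_nn_integral_finite) auto
  have w: "integrable M w"
    unfolding w_def using S g fin by (intro integrable_indicator_mult_if_set_nn_integral_finite) auto
  have "(\<lambda>i. integral\<^sup>L M (\<lambda>x. c i * u i x)) sums integral\<^sup>L M w"
  proof (rule sums_integral_dominated)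
    show "integrable M B"
      unfolding B_def using u w by simp
    show "AE x in M. (\<lambda>i. c i * u i x) sums w x"
      using gen_binomial_powr_sums[of "g _" b a] g01
      by (intro AE_I2) (simp add: c_def u_def w_def split: split_indicator)
    show "AE x in M. (\<Sum>i<m. \<bar>c i * u i x\<bar>) \<le> B x" for m
      using gen_binomial_powr_partial_abs_bound[of "g _" b a m] g01
      by (intro AE_I2) (simp add: B_def c_def u_def w_def split: split_indicator)
  qed (use u w in simp_all)
  moreover have "integral\<^sup>L M (u i) = enn2real (\<integral>\<^sup>+x\<in>S. ennreal (g x powr (real i + a)) \<partial>M)" for i
    unfolding u_def using S g by (intro integral_indicator_mult_eq_set_nn_integral) auto
  moreover have "integral\<^sup>L M w = enn2real (\<integral>\<^sup>+x\<in>S. ennreal ((1 - g x) powr b * g x powr a) \<partial>M)"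
    unfolding w_def using S g by (intro integral_indicator_mult_eq_set_nn_integral) auto
  ultimately show ?thesis
    by (simp add: c_def)
qed

lemma cdf_rv_eq_prob: "cdf_rv M X x = measure M (X -` {..x} \<inter> space M)"
  unfolding cdf_rv_def by (rule arg_cong[where f = "measure M"]) auto

lemma (in prob_space) cdf_rv_bounds: "0 \<le> cdf_rv M X x \<and> cdf_rv M X x \<le> 1"
  unfolding cdf_rv_def by simp

lemma (in prob_space) mono_cdf_rv:
  assumes "X \<in> borel_measurable M"
  shows "mono (cdf_rv M X)"
  unfolding mono_def cdf_rv_eq_prob
  using assms by (auto intro!: finite_measure_mono measurable_sets)

lemma (in prob_space) prob_INT_iid:
  assumes ind: "indep_vars (\<lambda>_. borel) Xs I" and I: "finite I" "I \<noteq> {}"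
    and law: "\<forall>i\<in>I. distr M borel (Xs i) = distr M borel X" and X: "X \<in> borel_measurable M"
    and A: "A \<in> sets borel"
  shows "prob (\<Inter>i\<in>I. Xs i -` A \<inter> space M) = prob (X -` A \<inter> space M) ^ card I"
proof -
  have "prob (Xs i -` A \<inter> space M) = prob (X -` A \<inter> space M)" if "i \<in> I" for i
  proof -
    have "Xs i \<in> borel_measurable M"
      using ind that by (simp add: indep_vars_def2)
    then have "prob (Xs i -` A \<inter> space M) = measure (distr M borel (Xs i)) A"
      using A by (simp add: measure_distr)
    also have "\<dots> = prob (X -` A \<inter> space M)"
      using law that X A by (simp add: measure_distr)
    finally show ?thesis .
  qed
  then show ?thesis
    using indep_varsD_finite[OF ind I(2,1)] A by simp
qed

lemma (in prob_space) cdf_rv_Max_iid: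
  assumes ind: "indep_vars (\<lambda>_. borel) Xs I" and I: "finite I" "I \<noteq> {}"
    and law: "\<forall>i\<in>I. distr M borel (Xs i) = distr M borel X" and X: "X \<in> borel_measurable M"
  shows "cdf_rv M (\<lambda>\<omega>. Max ((\<lambda>i. Xs i \<omega>) ` I)) = (\<lambda>x. cdf_rv M X x ^ card I)"
proof
  fix x
  have "{\<omega> \<in> space M. Max ((\<lambda>i. Xs i \<omega>) ` I) \<le> x} = (\<Inter>i\<in>I. Xs i -` {..x} \<inter> space M)"
    using I by (auto simp: Max_le_iff)
  then show "cdf_rv M (\<lambda>\<omega>. Max ((\<lambda>i. Xs i \<omega>) ` I)) x = cdf_rv M X x ^ card I"
    using prob_INT_iid[OF ind I law X] by (simp add: cdf_rv_def cdf_rv_eq_prob[symmetric])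
qed

lemma (in prob_space) cdf_rv_Min_iid:
  assumes ind: "indep_vars (\<lambda>_. borel) Xs I" and I: "finite I" "I \<noteq> {}"
    and law: "\<forall>i\<in>I. distr M borel (Xs i) = distr M borel X" and X: "X \<in> borel_measurable M"
  shows "cdf_rv M (\<lambda>\<omega>. Min ((\<lambda>i. Xs i \<omega>) ` I)) = (\<lambda>x. 1 - (1 - cdf_rv M X x) ^ card I)"
proof
  fix x
  have rv: "\<And>i. i \<in> I \<Longrightarrow> Xs i \<in> borel_measurable M"
    using ind by (simp add: indep_vars_def2)
  have "{\<omega> \<in> space M. Min ((\<lambda>i. Xs i \<omega>) ` I) \<le> x} = space M - (\<Inter>i\<in>I. Xs i -` {x<..} \<inter> space M)"
    using I by (auto simp: Min_le_iff not_le)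
  moreover have "(\<Inter>i\<in>I. Xs i -` {x<..} \<inter> space M) \<in> events"
    using rv I by (intro sets.finite_INT) auto
  moreover have "X -` {x<..} \<inter> space M = space M - (X -` {..x} \<inter> space M)"
    by auto
  moreover have "X -` {..x} \<inter> space M \<in> events"
    using X by measurable
  ultimately show "cdf_rv M (\<lambda>\<omega>. Min ((\<lambda>i. Xs i \<omega>) ` I)) x = 1 - (1 - cdf_rv M X x) ^ card I"
    using prob_INT_iid[OF ind I law X, of "{x<..}"]
    by (simp add: cdf_rv_def prob_compl cdf_rv_eq_prob[symmetric])
qed

lemma supp_int_cong:
  assumes "\<And>x. 0 < G x \<longleftrightarrow> 0 < F x" and "\<And>x. 0 < 1 - G x \<longleftrightarrow> 0 < 1 - F x"
  shows "supp_int G = supp_int F"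
  using assms by (simp add: supp_int_def lend_def rend_def)

lemma zero_less_power_iff_of_nonneg:
  fixes t :: real
  assumes "0 \<le> t" "0 < n"
  shows "0 < t ^ n \<longleftrightarrow> 0 < t"
  using assms by (cases "t = 0") (simp_all add: power_0_left)

lemma supp_int_power:
  assumes F: "\<And>x. 0 \<le> F x \<and> F x \<le> 1" and n: "0 < n"
  shows "supp_int (\<lambda>x. F x ^ n) = supp_int F"
proof (rule supp_int_cong)
  show "0 < F x ^ n \<longleftrightarrow> 0 < F x" for x
    using zero_less_power_iff_of_nonneg[of "F x" n] F n by simp
  show "0 < 1 - F x ^ n \<longleftrightarrow> 0 < 1 - F x" for x
    using power_less_one_iff[of "F x" n] F n by simp
qed

lemma supp_int_one_minus_power:
  assumes F: "\<And>x. 0 \<le> F x \<and> F x \<le> 1" and n: "0 < n"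
  shows "supp_int (\<lambda>x. 1 - (1 - F x) ^ n) = supp_int F"
proof (rule supp_int_cong)
  show "0 < 1 - (1 - F x) ^ n \<longleftrightarrow> 0 < F x" for x
    using power_less_one_iff[of "1 - F x" n] F n by simp
  show "0 < 1 - (1 - (1 - F x) ^ n) \<longleftrightarrow> 0 < 1 - F x" for x
    using zero_less_power_iff_of_nonneg[of "1 - F x" n] F n by simp
qed

lemma open_supp_int: "open (supp_int F)"
proof -
  have "supp_int F = {x. lend F < ereal x} \<inter> {x. ereal x < rend F}"
    by (auto simp: supp_int_def)
  then show ?thesis
    by (simp add: open_Collect_less continuous_on_ereal open_Int)
qed

lemma supp_int_imp_strict_bounds:
  assumes mono: "mono F" and x: "x \<in> supp_int F"
  shows "0 < F x \<and> F x < 1"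
proof
  have "lend F < ereal x"
    using x by (simp add: supp_int_def)
  then obtain y where "0 < F y" "y < x"
    by (auto simp: lend_def Inf_less_iff)
  then show "0 < F x"
    using monoD[OF mono, of y x] by simp
  have "ereal x < rend F"
    using x by (simp add: supp_int_def)
  then obtain y where "0 < 1 - F y" "x < y"
    by (auto simp: rend_def less_Sup_iff)
  then show "F x < 1"
    using monoD[OF mono, of x y] by simp
qed

lemma set_nn_integral_powr_of_nat_mult:
  fixes p :: "'a \<Rightarrow> real"
  assumes "\<And>x. x \<in> S \<Longrightarrow> 0 < p x"
  shows "(\<integral>\<^sup>+x\<in>S. ennreal (p x powr (real n * c)) \<partial>M) = (\<integral>\<^sup>+x\<in>S. ennreal ((p x ^ n) powr c) \<partial>M)"
  using assms by (intro set_nn_integral_cong) (auto simp: powr_powr[symmetric] powr_realpow)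

lemma (in prob_space) CIGF_Max_iid_sums:
  fixes Xs :: "'i \<Rightarrow> 'a \<Rightarrow> real"
  assumes ind: "indep_vars (\<lambda>_. borel) Xs I" and I: "finite I" "I \<noteq> {}"
    and law: "\<forall>i\<in>I. distr M borel (Xs i) = distr M borel X" and X: "X \<in> borel_measurable M"
    and fin: "CIGF M (\<lambda>\<omega>. Max ((\<lambda>i. Xs i \<omega>) ` I)) \<alpha> \<beta> < \<infinity>"
    and fin_H: "\<And>k::nat. CIGF_H M X (real (card I) * (real k + \<alpha>)) < \<infinity>"
  shows "(\<lambda>k. (-1)^k * (\<beta> gchoose k) * enn2real (CIGF_H M X (real (card I) * (real k + \<alpha>))))
           sums enn2real (CIGF M (\<lambda>\<omega>. Max ((\<lambda>i. Xs i \<omega>) ` I)) \<alpha> \<beta>)"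
proof -
  define F where "F = cdf_rv M X"
  define g where "g x = F x ^ card I" for x
  have n: "0 < card I"
    using I by (simp add: card_gt_0_iff)
  have F_supp: "0 < F x \<and> F x < 1" if "x \<in> supp_int F" for x
    using supp_int_imp_strict_bounds[OF mono_cdf_rv[OF X], of x] that unfolding F_def by blast
  have CIGF_eq: "CIGF M (\<lambda>\<omega>. Max ((\<lambda>i. Xs i \<omega>) ` I)) \<alpha> \<beta>
      = (\<integral>\<^sup>+x\<in>supp_int F. ennreal ((1 - g x) powr \<beta> * g x powr \<alpha>) \<partial>lborel)"
    using supp_int_power[of "cdf_rv M X", OF cdf_rv_bounds n]
    by (simp add: CIGF_def cdf_rv_Max_iid[OF ind I law X] g_def F_def mult.commute)
  have H_eq: "CIGF_H M X (real (card I) * (real k + \<alpha>))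
      = (\<integral>\<^sup>+x\<in>supp_int F. ennreal (g x powr (real k + \<alpha>)) \<partial>lborel)" for k
    unfolding CIGF_H_def Let_def F_def[symmetric] g_def
    using F_supp by (intro set_nn_integral_powr_of_nat_mult) auto
  show ?thesis
    unfolding CIGF_eq H_eq
  proof (rule gen_binomial_set_nn_integral_sums)
    show "supp_int F \<in> sets lborel"
      using open_supp_int by simp
    show "g \<in> borel_measurable lborel"
      unfolding g_def F_def using borel_measurable_mono[OF mono_cdf_rv[OF X]] by simp
    show "0 < g x \<and> g x < 1" if "x \<in> supp_int F" for x
      using F_supp[OF that] n unfolding g_def by (simp add: power_less_one_iff)
  qed (use fin fin_H in \<open>simp_all add: CIGF_eq H_eq\<close>)
qed

lemma (in prob_space) CIGF_Min_iid_sums: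
  fixes Xs :: "'i \<Rightarrow> 'a \<Rightarrow> real"
  assumes ind: "indep_vars (\<lambda>_. borel) Xs I" and I: "finite I" "I \<noteq> {}"
    and law: "\<forall>i\<in>I. distr M borel (Xs i) = distr M borel X" and X: "X \<in> borel_measurable M"
    and fin: "CIGF M (\<lambda>\<omega>. Min ((\<lambda>i. Xs i \<omega>) ` I)) \<alpha> \<beta> < \<infinity>"
    and fin_K: "\<And>k::nat. CIGF_K M X (real (card I) * (real k + \<beta>)) < \<infinity>"
  shows "(\<lambda>k. (-1)^k * (\<alpha> gchoose k) * enn2real (CIGF_K M X (real (card I) * (real k + \<beta>))))
           sums enn2real (CIGF M (\<lambda>\<omega>. Min ((\<lambda>i. Xs i \<omega>) ` I)) \<alpha> \<beta>)"
proof -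
  define F where "F = cdf_rv M X"
  define g where "g x = (1 - F x) ^ card I" for x
  have n: "0 < card I"
    using I by (simp add: card_gt_0_iff)
  have F_supp: "0 < F x \<and> F x < 1" if "x \<in> supp_int F" for x
    using supp_int_imp_strict_bounds[OF mono_cdf_rv[OF X], of x] that unfolding F_def by blast
  have CIGF_eq: "CIGF M (\<lambda>\<omega>. Min ((\<lambda>i. Xs i \<omega>) ` I)) \<alpha> \<beta>
      = (\<integral>\<^sup>+x\<in>supp_int F. ennreal ((1 - g x) powr \<alpha> * g x powr \<beta>) \<partial>lborel)"
    using supp_int_one_minus_power[of "cdf_rv M X", OF cdf_rv_bounds n]
    by (simp add: CIGF_def cdf_rv_Min_iid[OF ind I law X] g_def F_def)
  have K_eq: "CIGF_K M X (real (card I) * (real k + \<beta>))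
      = (\<integral>\<^sup>+x\<in>supp_int F. ennreal (g x powr (real k + \<beta>)) \<partial>lborel)" for k
    unfolding CIGF_K_def Let_def F_def[symmetric] g_def
    using F_supp by (intro set_nn_integral_powr_of_nat_mult) auto
  show ?thesis
    unfolding CIGF_eq K_eq
  proof (rule gen_binomial_set_nn_integral_sums)
    show "supp_int F \<in> sets lborel"
      using open_supp_int by simp
    show "g \<in> borel_measurable lborel"
      unfolding g_def F_def using borel_measurable_mono[OF mono_cdf_rv[OF X]] by simp
    show "0 < g x \<and> g x < 1" if "x \<in> supp_int F" for x
      using F_supp[OF that] n unfolding g_def by (simp add: power_less_one_iff)
  qed (use fin fin_K in \<open>simp_all add: CIGF_eq K_eq\<close>)
qed

theorem proposition10:
  fixes M :: "'a measure" and X :: "'a \<Rightarrow> real" and Xs :: "nat \<Rightarrow> 'a \<Rightarrow> real" and n :: nat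
  assumes "prob_space M"
    and "n \<ge> 1"
    and "X \<in> borel_measurable M"
    and "\<forall>\<omega>\<in>space M. X \<omega> \<ge> 0"
    and "\<forall>i<n. \<forall>\<omega>\<in>space M. Xs i \<omega> \<ge> 0"
    and "prob_space.indep_vars M (\<lambda>_. borel) Xs {..<n}"
    and "\<forall>i<n. distr M borel (Xs i) = distr M borel X"
  shows
    "(\<forall>\<alpha> \<beta>. CIGF M (\<lambda>\<omega>. Max ((\<lambda>i. Xs i \<omega>) ` {..<n})) \<alpha> \<beta> < \<infinity> \<longrightarrow>
        (\<forall>i::nat. CIGF_H M X (real n * (real i + \<alpha>)) < \<infinity>) \<longrightarrow>
        (\<lambda>i. (-1) ^ i * (\<beta> gchoose i) * enn2real (CIGF_H M X (real n * (real i + \<alpha>))))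
          sums enn2real (CIGF M (\<lambda>\<omega>. Max ((\<lambda>i. Xs i \<omega>) ` {..<n})) \<alpha> \<beta>))
     \<and>
     (\<forall>\<alpha> \<beta>. CIGF M (\<lambda>\<omega>. Min ((\<lambda>i. Xs i \<omega>) ` {..<n})) \<alpha> \<beta> < \<infinity> \<longrightarrow>
        (\<forall>j::nat. CIGF_K M X (real n * (real j + \<beta>)) < \<infinity>) \<longrightarrow>
        (\<lambda>j. (-1) ^ j * (\<alpha> gchoose j) * enn2real (CIGF_K M X (real n * (real j + \<beta>))))
          sums enn2real (CIGF M (\<lambda>\<omega>. Min ((\<lambda>i. Xs i \<omega>) ` {..<n})) \<alpha> \<beta>))"
proof -
  interpret prob_space M
    by fact
  have I: "finite {..<n}" "{..<n} \<noteq> {}"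
    using \<open>n \<ge> 1\<close> by (simp_all add: lessThan_empty_iff)
  have law: "\<forall>i\<in>{..<n}. distr M borel (Xs i) = distr M borel X"
    using assms(7) by simp
  note Max_sums = CIGF_Max_iid_sums[OF assms(6) I law assms(3)]
    and Min_sums = CIGF_Min_iid_sums[OF assms(6) I law assms(3)]
  show ?thesis
    using Max_sums Min_sums by simp
qed

end
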